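(* For every approval-based SCV instance there exists a committee that simultaneously satisfies weak-SW-JR and IW-JR, and such a committee is produced by the following procedure: (1) start with $W=\emptyset$; (2) for each $j=1,\ldots,\ell$, repeatedly add to $W$ a candidate of $C_j$ whose support among voters not yet having an approved candidate in $W\cap C_j$ is largest, as long as this support is at least $n/k_j$ and fewer than $k_j$ candidates of $C_j$ have been chosen; (3) then, using the remaining positions, repeatedly add an unelected candidate (from a subset $C_j$ with $|W\cap C_j|<k_j$) whose support among voters having no approved candidate in $W$ is largest, as long as this support is at least $n/k$; (4) fill any remaining positions arbitrarily so that $|W\cap C_j|=k_j$ for all $j$. Here the support of a candidate $c$ among a set of voters $S$ is $|\{i\in S: c\in A_i\}|$.
   Context: An approval-based sub-committee voting (SCV) instance consists of a set of voters $N=\{1,\ldots,n\}$, a finite set of candidates $C$ partitioned into candidate subsets $C_1,\ldots,C_\ell$, positive integer quotas $k_j\le |C_j|$ with $k=\sum_{j=1}^\ell k_j$, and approval ballots $A_i\subseteq C$ for $i\in N$. A committee is a set $W\subseteq C$ with $|W\cap C_j|=k_j$ for every $j$. $W$ satisfies Intra-wise JR (IW-JR) if for every $X\subseteq N$ and every $j$, whenever $|X|\ge n/k_j$ and $|(\bigcap_{i\in X}A_i)\cap C_j|\ge 1$, we have $|W\cap C_j\cap \bigcup_{i\in X}A_i|\ge 1$. $W$ satisfies weak-SW-JR if for every $X\subseteq N$ with $|X|\ge n/k$ and $|(\bigcap_{i\in X}A_i)\cap C_j|\ge 1$ for all $j=1,\ldots,\ell$ we have $|W\cap \bigcup_{i\in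 X}A_i|\ge 1$. *)

theory Defs
  imports Main Complex_Main
begin

(* Voters: finite set N :: 'v set, n = card N.
   Candidates: C :: 'c set, partitioned into Cs 0, ..., Cs (l-1) (0-indexed).
   Quotas: kq j for j < l; k = sum of quotas.  Ballots: A :: 'v => 'c set. *)

definition total_k :: "nat \<Rightarrow> (nat \<Rightarrow> nat) \<Rightarrow> nat" where
  "total_k l kq = (\<Sum>j<l. kq j)"

definition scv_instance ::
  "'v set \<Rightarrow> ('v \<Rightarrow> 'c set) \<Rightarrow> 'c set \<Rightarrow> nat \<Rightarrow> (nat \<Rightarrow> 'c set) \<Rightarrow> (nat \<Rightarrow> nat) \<Rightarrow> bool" where
  "scv_instance N A C l Cs kq \<longleftrightarrow>
     finite N \<and> N \<noteq> {} \<and> finite C \<and> l \<ge> 1 \<and>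
     (\<forall>j<l. Cs j \<subseteq> C) \<and>
     (\<forall>j<l. \<forall>j'<l. j \<noteq> j' \<longrightarrow> Cs j \<inter> Cs j' = {}) \<and>
     (\<Union>j<l. Cs j) = C \<and>
     (\<forall>j<l. 1 \<le> kq j \<and> kq j \<le> card (Cs j)) \<and>
     (\<forall>i\<in>N. A i \<subseteq> C)"

definition is_committee :: "'c set \<Rightarrow> nat \<Rightarrow> (nat \<Rightarrow> 'c set) \<Rightarrow> (nat \<Rightarrow> nat) \<Rightarrow> 'c set \<Rightarrow> bool" where
  "is_committee C l Cs kq W \<longleftrightarrow> W \<subseteq> C \<and> (\<forall>j<l. card (W \<inter> Cs j) = kq j)"

definition IW_JR ::
  "'v set \<Rightarrow> ('v \<Rightarrow> 'c set) \<Rightarrow> nat \<Rightarrow> (nat \<Rightarrow> 'c set) \<Rightarrow> (nat \<Rightarrow> nat) \<Rightarrow> 'c set \<Rightarrow> bool" where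
  "IW_JR N A l Cs kq W \<longleftrightarrow>
     (\<forall>X. X \<subseteq> N \<longrightarrow> (\<forall>j<l.
        real (card X) \<ge> real (card N) / real (kq j) \<and>
        card {c \<in> Cs j. \<forall>i\<in>X. c \<in> A i} \<ge> 1 \<longrightarrow>
        card (W \<inter> Cs j \<inter> (\<Union>i\<in>X. A i)) \<ge> 1))"

definition weak_SW_JR ::
  "'v set \<Rightarrow> ('v \<Rightarrow> 'c set) \<Rightarrow> nat \<Rightarrow> (nat \<Rightarrow> 'c set) \<Rightarrow> (nat \<Rightarrow> nat) \<Rightarrow> 'c set \<Rightarrow> bool" where
  "weak_SW_JR N A l Cs kq W \<longleftrightarrow>
     (\<forall>X. X \<subseteq> N \<longrightarrow>
        real (card X) \<ge> real (card N) / real (total_k l kq) \<and>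
        (\<forall>j<l. card {c \<in> Cs j. \<forall>i\<in>X. c \<in> A i} \<ge> 1) \<longrightarrow>
        card (W \<inter> (\<Union>i\<in>X. A i)) \<ge> 1)"

definition support :: "('v \<Rightarrow> 'c set) \<Rightarrow> 'v set \<Rightarrow> 'c \<Rightarrow> nat" where
  "support A S c = card {i \<in> S. c \<in> A i}"

definition uncov_j :: "'v set \<Rightarrow> ('v \<Rightarrow> 'c set) \<Rightarrow> (nat \<Rightarrow> 'c set) \<Rightarrow> nat \<Rightarrow> 'c set \<Rightarrow> 'v set" where
  "uncov_j N A Cs j W = {i \<in> N. A i \<inter> W \<inter> Cs j = {}}"

definition step2 ::
  "'v set \<Rightarrow> ('v \<Rightarrow> 'c set) \<Rightarrow> (nat \<Rightarrow> 'c set) \<Rightarrow> (nat \<Rightarrow> nat) \<Rightarrow> nat \<Rightarrow> 'c set \<Rightarrow> 'c set \<Rightarrow> bool" where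
  "step2 N A Cs kq j W W' \<longleftrightarrow>
     card (W \<inter> Cs j) < kq j \<and>
     (\<exists>c \<in> Cs j - W.
        real (support A (uncov_j N A Cs j W) c) \<ge> real (card N) / real (kq j) \<and>
        (\<forall>c' \<in> Cs j - W. support A (uncov_j N A Cs j W) c' \<le> support A (uncov_j N A Cs j W) c) \<and>
        W' = insert c W)"

definition stop2 ::
  "'v set \<Rightarrow> ('v \<Rightarrow> 'c set) \<Rightarrow> (nat \<Rightarrow> 'c set) \<Rightarrow> (nat \<Rightarrow> nat) \<Rightarrow> nat \<Rightarrow> 'c set \<Rightarrow> bool" where
  "stop2 N A Cs kq j W \<longleftrightarrow>
     \<not> (card (W \<inter> Cs j) < kq j \<and>
        (\<exists>c \<in> Cs j - W. real (support A (uncov_j N A Cs j W) c) \<ge> real (card N) / real (kq j)))"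

definition eligible3 :: "'c set \<Rightarrow> nat \<Rightarrow> (nat \<Rightarrow> 'c set) \<Rightarrow> (nat \<Rightarrow> nat) \<Rightarrow> 'c set \<Rightarrow> 'c \<Rightarrow> bool" where
  "eligible3 C l Cs kq W c \<longleftrightarrow> c \<in> C - W \<and> (\<exists>j<l. c \<in> Cs j \<and> card (W \<inter> Cs j) < kq j)"

definition uncov :: "'v set \<Rightarrow> ('v \<Rightarrow> 'c set) \<Rightarrow> 'c set \<Rightarrow> 'v set" where
  "uncov N A W = {i \<in> N. A i \<inter> W = {}}"

definition step3 ::
  "'v set \<Rightarrow> ('v \<Rightarrow> 'c set) \<Rightarrow> 'c set \<Rightarrow> nat \<Rightarrow> (nat \<Rightarrow> 'c set) \<Rightarrow> (nat \<Rightarrow> nat) \<Rightarrow> 'c set \<Rightarrow> 'c set \<Rightarrow> bool" where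
  "step3 N A C l Cs kq W W' \<longleftrightarrow>
     (\<exists>c. eligible3 C l Cs kq W c \<and>
        real (support A (uncov N A W) c) \<ge> real (card N) / real (total_k l kq) \<and>
        (\<forall>c'. eligible3 C l Cs kq W c' \<longrightarrow> support A (uncov N A W) c' \<le> support A (uncov N A W) c) \<and>
        W' = insert c W)"

definition stop3 ::
  "'v set \<Rightarrow> ('v \<Rightarrow> 'c set) \<Rightarrow> 'c set \<Rightarrow> nat \<Rightarrow> (nat \<Rightarrow> 'c set) \<Rightarrow> (nat \<Rightarrow> nat) \<Rightarrow> 'c set \<Rightarrow> bool" where
  "stop3 N A C l Cs kq W \<longleftrightarrow>
     (\<forall>c. eligible3 C l Cs kq W c \<longrightarrow>
        real (support A (uncov N A W) c) < real (card N) / real (total_k l kq))"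

text \<open>W is a possible output of the (nondeterministic: ties, arbitrary filling) procedure.
  Ws j is the committee before processing subset j (Ws 0 = {}), Ws l after phase (2),
  W3 after phase (3), W after phase (4).\<close>
definition procedure_output ::
  "'v set \<Rightarrow> ('v \<Rightarrow> 'c set) \<Rightarrow> 'c set \<Rightarrow> nat \<Rightarrow> (nat \<Rightarrow> 'c set) \<Rightarrow> (nat \<Rightarrow> nat) \<Rightarrow> 'c set \<Rightarrow> bool" where
  "procedure_output N A C l Cs kq W \<longleftrightarrow>
     (\<exists>Ws W3. Ws 0 = {} \<and>
        (\<forall>j<l. (step2 N A Cs kq j)\<^sup>*\<^sup>* (Ws j) (Ws (Suc j)) \<and> stop2 N A Cs kq j (Ws (Suc j))) \<and>
        (step3 N A C l Cs kq)\<^sup>*\<^sup>* (Ws l) W3 \<and> stop3 N A C l Cs kq W3 \<and>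
        W3 \<subseteq> W \<and> is_committee C l Cs kq W)"

end

theory Submission
  imports Defs
begin

text \<open>Every greedy step adds a candidate supported by at least \<open>t\<close> still uncovered voters,
  so a committee \<open>W\<close> grown this way covers at least \<open>|W| t\<close> voters. In phase (2) this
  is applied within each \<open>C\<^sub>j\<close> with \<open>t = n/k\<^sub>j\<close>; summing over \<open>j\<close>, the committee after
  phase (2) covers at least \<open>|W| n/k\<close> voters, and phase (3) keeps this rate with \<open>t = n/k\<close>.
  If a group \<open>X\<close> witnessed a violation of IW-JR (resp. weak-SW-JR), its common candidate
  would still be electable with support at least \<open>|X|\<close>, so the corresponding phase can
  only have stopped because the quota was exhausted; but then at least \<open>k\<^sub>j \<cdot> n/k\<^sub>j = n\<close>
  (resp. \<open>k \<cdot> n/k = n\<close>) voters are covered, leaving no room for the uncovered voters of \<open>X\<close>.\<close>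

definition covered :: "'v set \<Rightarrow> ('v \<Rightarrow> 'c set) \<Rightarrow> 'c set \<Rightarrow> 'v set" where
  "covered N A W = {i \<in> N. A i \<inter> W \<noteq> {}}"

definition covers_at_rate :: "'v set \<Rightarrow> ('v \<Rightarrow> 'c set) \<Rightarrow> real \<Rightarrow> 'c set \<Rightarrow> bool" where
  "covers_at_rate N A t W \<longleftrightarrow> real (card W) * t \<le> real (card (covered N A W))"

definition within_quotas :: "nat \<Rightarrow> (nat \<Rightarrow> 'c set) \<Rightarrow> (nat \<Rightarrow> nat) \<Rightarrow> 'c set \<Rightarrow> bool" where
  "within_quotas l Cs kq W \<longleftrightarrow> (\<forall>j<l. card (W \<inter> Cs j) \<le> kq j)"

lemma uncov_j_eq_uncov: "uncov_j N A Cs j W = uncov N A (W \<inter> Cs j)"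
  unfolding uncov_j_def uncov_def by (simp add: Int_assoc)

lemma covered_mono: "W \<subseteq> W' \<Longrightarrow> covered N A W \<subseteq> covered N A W'"
  unfolding covered_def by blast

lemma card_covered_insert:
  assumes "finite N"
  shows "card (covered N A (insert c W)) = card (covered N A W) + support A (uncov N A W) c"
proof -
  have "covered N A (insert c W) = covered N A W \<union> {i \<in> uncov N A W. c \<in> A i}"
    unfolding covered_def uncov_def by auto
  moreover have "covered N A W \<inter> {i \<in> uncov N A W. c \<in> A i} = {}"
    unfolding covered_def uncov_def by auto
  ultimately show ?thesis
    unfolding support_def using assms by (simp add: card_Un_disjoint covered_def uncov_def)
qed

lemma covers_at_rate_empty [simp]: "covers_at_rate N A t {}"
  unfolding covers_at_rate_def by simp

lemma covers_at_rate_insert: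
  assumes "finite N" "finite W" "c \<notin> W" "t \<le> real (support A (uncov N A W) c)"
    and "covers_at_rate N A t W"
  shows "covers_at_rate N A t (insert c W)"
  using assms card_covered_insert[OF assms(1), of A c W]
  unfolding covers_at_rate_def by (simp add: distrib_right)

lemma card_le_support:
  assumes "finite N" "X \<subseteq> uncov N A W" "\<forall>i\<in>X. c \<in> A i"
  shows "card X \<le> support A (uncov N A W) c"
  unfolding support_def
  by (rule card_mono) (use assms in \<open>auto simp: uncov_def\<close>)

lemma uncov_eq_empty_if_covers_at_rate:
  assumes "finite N" "covers_at_rate N A (real (card N) / real m) W" "card W = m" "m > 0"
  shows "uncov N A W = {}"
proof -
  have "card N \<le> card (covered N A W)"
    using assms(2-4) unfolding covers_at_rate_def by simp
  then have "covered N A W = N"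
    using assms(1) by (intro card_seteq) (auto simp: covered_def)
  then show ?thesis
    unfolding covered_def uncov_def by blast
qed

lemma covers_at_rate_from_slices:
  fixes l :: nat
  assumes "finite N" "card W = (\<Sum>j<l. card (W \<inter> Cs j))" "\<forall>j<l. kq j > 0"
    and slices: "\<forall>j<l. covers_at_rate N A (real (card N) / real (kq j)) (W \<inter> Cs j)"
  shows "covers_at_rate N A (real (card N) / real (\<Sum>j<l. kq j)) W"
proof -
  define cov where "cov = real (card (covered N A W))"
  define K where "K = real (\<Sum>j<l. kq j)"
  have "real (card (W \<inter> Cs j)) * real (card N) \<le> cov * real (kq j)" if j: "j < l" for j
  proof -
    have "card (covered N A (W \<inter> Cs j)) \<le> card (covered N A W)"
      using assms(1) by (intro card_mono covered_mono) (auto simp: covered_def)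
    then have "real (card (W \<inter> Cs j)) * (real (card N) / real (kq j)) \<le> cov"
      using slices j unfolding covers_at_rate_def cov_def by (meson of_nat_le_iff order_trans)
    then show ?thesis
      using assms(3) j by (simp add: field_simps)
  qed
  then have "(\<Sum>j<l. real (card (W \<inter> Cs j)) * real (card N)) \<le> (\<Sum>j<l. cov * real (kq j))"
    by (intro sum_mono) auto
  then have "real (card W) * real (card N) \<le> cov * real (\<Sum>j<l. kq j)"
    using assms(2) by (simp add: sum_distrib_left sum_distrib_right)
  then have le: "real (card W) * real (card N) \<le> cov * K"
    unfolding K_def .
  show ?thesis
  proof (cases "K = 0")
    case False
    moreover have "0 \<le> K"
      unfolding K_def by (rule of_nat_0_le_iff)
    ultimately have "0 < K"
      by simp
    then show ?thesis
      using le unfolding covers_at_rate_def cov_def[symmetric] K_def[symmetric]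
      by (simp add: pos_divide_le_eq)
  qed (simp add: covers_at_rate_def K_def)
qed

lemma exists_rtranclp_to_stop:
  assumes "finite C" "W \<subseteq> C"
    and progress: "\<And>W. W \<subseteq> C \<Longrightarrow> \<not> S W \<Longrightarrow> \<exists>W'. R W W' \<and> W \<subset> W' \<and> W' \<subseteq> C"
  shows "\<exists>W'. R\<^sup>*\<^sup>* W W' \<and> S W' \<and> W' \<subseteq> C"
  using assms(2)
proof (induction "card (C - W)" arbitrary: W rule: less_induct)
  case less
  show ?case
  proof (cases "S W")
    case False
    then obtain W' where W': "R W W'" "W \<subset> W'" "W' \<subseteq> C"
      using progress less.prems by blast
    then have "card (C - W') < card (C - W)"
      using assms(1) by (intro psubset_card_mono) auto
    then obtain W'' where "R\<^sup>*\<^sup>* W' W''" "S W''" "W'' \<subseteq> C"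
      using less.hyps W'(3) by blast
    then show ?thesis
      using W'(1) by (meson converse_rtranclp_into_rtranclp)
  qed (use less.prems in blast)
qed

lemma exists_greedy_choice:
  fixes g :: "'c \<Rightarrow> nat"
  assumes "finite S" "c \<in> S" "t \<le> real (g c)"
  obtains c0 where "c0 \<in> S" "t \<le> real (g c0)" "\<forall>c'\<in>S. g c' \<le> g c0"
proof -
  have "Max (g ` S) \<in> g ` S"
    using assms(1,2) by (intro Max_in) auto
  then obtain c0 where c0: "c0 \<in> S" "g c0 = Max (g ` S)"
    by auto
  then have "\<forall>c'\<in>S. g c' \<le> g c0"
    using assms(1) by simp
  moreover have "t \<le> real (g c0)"
    using assms(3) calculation assms(2) by (meson of_nat_le_iff order_trans)
  ultimately show ?thesis
    using that c0(1) by blast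
qed

lemma card_eq_sum_slices:
  fixes l :: nat
  assumes "finite W" "W \<subseteq> (\<Union>j<l. Cs j)" "\<forall>j<l. \<forall>j'<l. j \<noteq> j' \<longrightarrow> Cs j \<inter> Cs j' = {}"
  shows "card W = (\<Sum>j<l. card (W \<inter> Cs j))"
proof -
  have "W = (\<Union>j<l. W \<inter> Cs j)"
    using assms(2) by blast
  moreover have "card (\<Union>j<l. W \<inter> Cs j) = (\<Sum>j<l. card (W \<inter> Cs j))"
    using assms(1,3) by (intro card_UN_disjoint) auto
  ultimately show ?thesis
    by simp
qed

lemma stages_subset_Union:
  assumes "Ws 0 = {}" "\<forall>j<l. Ws (Suc j) \<subseteq> Ws j \<union> Cs j" "m \<le> l"
  shows "Ws m \<subseteq> (\<Union>i<m. Cs i)"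
  using assms(3)
proof (induction m)
  case (Suc m)
  then have "Ws (Suc m) \<subseteq> Ws m \<union> Cs m" "Ws m \<subseteq> (\<Union>i<m. Cs i)"
    using assms(2) by simp_all
  then show ?case
    by (auto simp: lessThan_Suc)
qed (use assms(1) in simp)

lemma slice_of_final_stage:
  assumes disj: "\<forall>j<l. \<forall>j'<l. j \<noteq> j' \<longrightarrow> Cs j \<inter> Cs j' = {}"
    and "Ws 0 = {}" and stages: "\<forall>j<l. Ws j \<subseteq> Ws (Suc j) \<and> Ws (Suc j) \<subseteq> Ws j \<union> Cs j"
    and "j < l"
  shows "Ws j \<inter> Cs j = {}" "Ws l \<inter> Cs j = Ws (Suc j) \<inter> Cs j"
proof -
  have "\<forall>i<j. Cs i \<inter> Cs j = {}"
    using disj \<open>j < l\<close> by simp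
  moreover have "Ws j \<subseteq> (\<Union>i<j. Cs i)"
    using stages_subset_Union[where Ws = Ws and l = l and Cs = Cs and m = j] assms(2) stages \<open>j < l\<close>
    by simp
  ultimately show "Ws j \<inter> Cs j = {}"
    by blast
  have stable: "Ws m \<inter> Cs j = Ws (Suc j) \<inter> Cs j" if "Suc j \<le> m" "m \<le> l" for m
    using that
  proof (induction m rule: dec_induct)
    case (step m)
    have "Cs m \<inter> Cs j = {}"
      using disj step.hyps(1,2) step.prems by simp
    moreover have "Ws m \<subseteq> Ws (Suc m)" "Ws (Suc m) \<subseteq> Ws m \<union> Cs m"
      using stages step.hyps(2) step.prems by simp_all
    ultimately have "Ws (Suc m) \<inter> Cs j = Ws m \<inter> Cs j"
      by blast
    then show ?case
      using step by simp
  qed simp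
  show "Ws l \<inter> Cs j = Ws (Suc j) \<inter> Cs j"
    using stable[of l] \<open>j < l\<close> by simp
qed

lemma exists_committee_extending:
  assumes "finite C" "W \<subseteq> C" "(\<Union>j<l. Cs j) = C"
    and disj: "\<forall>j<l. \<forall>j'<l. j \<noteq> j' \<longrightarrow> Cs j \<inter> Cs j' = {}"
    and "within_quotas l Cs kq W" "\<forall>j<l. kq j \<le> card (Cs j)"
  obtains W' where "W \<subseteq> W'" "is_committee C l Cs kq W'"
proof -
  have "\<forall>j. \<exists>E. j < l \<longrightarrow> W \<inter> Cs j \<subseteq> E \<and> E \<subseteq> Cs j \<and> card E = kq j"
  proof
    fix j
    show "\<exists>E. j < l \<longrightarrow> W \<inter> Cs j \<subseteq> E \<and> E \<subseteq> Cs j \<and> card E = kq j"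
      using assms(1,3,5,6) unfolding within_quotas_def
      by (cases "j < l") (auto intro!: exists_subset_between intro: finite_subset)
  qed
  then obtain E where E: "\<And>j. j < l \<Longrightarrow> W \<inter> Cs j \<subseteq> E j \<and> E j \<subseteq> Cs j \<and> card (E j) = kq j"
    by metis
  have "(\<Union>i<l. E i) \<inter> Cs j = E j" if "j < l" for j
  proof -
    have "E i \<inter> Cs j = {}" if "i < l" "i \<noteq> j" for i
      using E[of i] disj \<open>j < l\<close> that by blast
    then show ?thesis
      using E[of j] \<open>j < l\<close> by blast
  qed
  moreover have "W \<subseteq> (\<Union>i<l. E i)"
    using E assms(2,3) by blast
  moreover have "(\<Union>i<l. E i) \<subseteq> C"
    using E assms(3) by blast
  ultimately show ?thesis
    using that E unfolding is_committee_def by auto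
qed

lemma stop2_slice_cong:
  assumes "W \<inter> Cs j = W' \<inter> Cs j"
  shows "stop2 N A Cs kq j W \<longleftrightarrow> stop2 N A Cs kq j W'"
proof -
  have "Cs j - W = Cs j - W'"
    using assms by blast
  then show ?thesis
    unfolding stop2_def uncov_j_eq_uncov assms by simp
qed

lemma step2_rtranclp_extends:
  assumes "(step2 N A Cs kq j)\<^sup>*\<^sup>* W W'"
  shows "W \<subseteq> W' \<and> W' \<subseteq> W \<union> Cs j"
  using assms by (induction rule: rtranclp_induct) (auto simp: step2_def)

lemma step2_rtranclp_covers:
  assumes "finite N" "finite (Cs j)" "(step2 N A Cs kq j)\<^sup>*\<^sup>* W W'"
    and "card (W \<inter> Cs j) \<le> kq j" "covers_at_rate N A (real (card N) / real (kq j)) (W \<inter> Cs j)"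
  shows "card (W' \<inter> Cs j) \<le> kq j \<and> covers_at_rate N A (real (card N) / real (kq j)) (W' \<inter> Cs j)"
  using assms(3)
proof (induction rule: rtranclp_induct)
  case (step Y Z)
  then obtain c where c: "c \<in> Cs j - Y" "Z = insert c Y" "card (Y \<inter> Cs j) < kq j"
    "real (card N) / real (kq j) \<le> real (support A (uncov N A (Y \<inter> Cs j)) c)"
    unfolding step2_def uncov_j_eq_uncov by blast
  then have "Z \<inter> Cs j = insert c (Y \<inter> Cs j)" "c \<notin> Y \<inter> Cs j"
    by auto
  then show ?case
    using step.IH c(3,4) assms(1,2) covers_at_rate_insert[of N "Y \<inter> Cs j" c]
    by (simp add: card_insert_if)
qed (use assms(4,5) in simp)

lemma step3_rtranclp_within_quotas:
  assumes disj: "\<forall>j<l. \<forall>j'<l. j \<noteq> j' \<longrightarrow> Cs j \<inter> Cs j' = {}" and "finite C"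
    and "(step3 N A C l Cs kq)\<^sup>*\<^sup>* W W'" "W \<subseteq> C" "within_quotas l Cs kq W"
  shows "W \<subseteq> W' \<and> W' \<subseteq> C \<and> within_quotas l Cs kq W'"
  using assms(3)
proof (induction rule: rtranclp_induct)
  case (step Y Z)
  then obtain c j where c: "c \<in> C - Y" "j < l" "c \<in> Cs j" "card (Y \<inter> Cs j) < kq j" "Z = insert c Y"
    unfolding step3_def eligible3_def by blast
  have "finite Y"
    using step.IH assms(2) finite_subset by blast
  have "card (Z \<inter> Cs j') \<le> kq j'" if "j' < l" for j'
  proof (cases "j' = j")
    case True
    then show ?thesis
      using c \<open>finite Y\<close> by (simp add: card_insert_if)
  next
    case False
    then have "Z \<inter> Cs j' = Y \<inter> Cs j'"
      using c disj that by blast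
    then show ?thesis
      using step.IH that unfolding within_quotas_def by simp
  qed
  then show ?case
    using step.IH c unfolding within_quotas_def by blast
qed (use assms(4,5) in simp)

lemma step3_rtranclp_covers:
  assumes "finite N" "finite C" "(step3 N A C l Cs kq)\<^sup>*\<^sup>* W W'" "W \<subseteq> C"
    and "covers_at_rate N A (real (card N) / real (total_k l kq)) W"
  shows "W' \<subseteq> C \<and> covers_at_rate N A (real (card N) / real (total_k l kq)) W'"
  using assms(3)
proof (induction rule: rtranclp_induct)
  case (step Y Z)
  then obtain c where c: "c \<in> C - Y" "Z = insert c Y"
    "real (card N) / real (total_k l kq) \<le> real (support A (uncov N A Y) c)"
    unfolding step3_def eligible3_def by blast
  moreover have "finite Y"
    using step.IH assms(2) finite_subset by blast
  ultimately show ?case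
    using step.IH covers_at_rate_insert[OF assms(1) \<open>finite Y\<close>] by simp
qed (use assms(4,5) in simp)

lemma card_uncovered_subset_less:
  assumes "finite N" "N \<noteq> {}" "m > 0"
    and "covers_at_rate N A (real (card N) / real m) W" "card W = m" "X \<subseteq> uncov N A W"
  shows "real (card X) < real (card N) / real m"
proof -
  have "X = {}"
    using assms(6) uncov_eq_empty_if_covers_at_rate[OF assms(1,4,5,3)] by blast
  moreover have "0 < real (card N) / real m"
    using assms(1-3) by (simp add: card_gt_0_iff)
  ultimately show ?thesis
    by simp
qed

lemma IW_JR_if_phase2_stopped:
  assumes "finite N" "N \<noteq> {}" "finite W" "W2 \<subseteq> W"
    and phase2: "\<forall>j<l. kq j > 0 \<and> stop2 N A Cs kq j W2 \<and> card (W2 \<inter> Cs j) \<le> kq j \<and>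
      covers_at_rate N A (real (card N) / real (kq j)) (W2 \<inter> Cs j)"
  shows "IW_JR N A l Cs kq W"
  unfolding IW_JR_def
proof (intro allI impI)
  fix X j
  assume X: "X \<subseteq> N" and j: "j < l"
    and large: "real (card N) / real (kq j) \<le> real (card X) \<and> 1 \<le> card {c \<in> Cs j. \<forall>i\<in>X. c \<in> A i}"
  then obtain c where c: "c \<in> Cs j" "\<forall>i\<in>X. c \<in> A i"
    by (auto simp: Suc_le_eq card_gt_0_iff)
  have "W \<inter> Cs j \<inter> (\<Union>i\<in>X. A i) \<noteq> {}"
  proof
    assume none: "W \<inter> Cs j \<inter> (\<Union>i\<in>X. A i) = {}"
    define S where "S = W2 \<inter> Cs j"
    have X_uncov: "X \<subseteq> uncov N A S"
      using X none assms(4) unfolding uncov_def S_def by blast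
    have "0 < real (card N) / real (kq j)"
      using assms(1,2) phase2 j by (simp add: card_gt_0_iff)
    then have "X \<noteq> {}"
      using large by auto
    then have "c \<in> Cs j - W2"
      using c none assms(4) by blast
    moreover have "real (card N) / real (kq j) \<le> real (support A (uncov N A S) c)"
      using card_le_support[OF assms(1) X_uncov c(2)] large by linarith
    ultimately have "card S = kq j"
      using phase2 j unfolding stop2_def uncov_j_eq_uncov S_def by force
    then show False
      using card_uncovered_subset_less[OF assms(1,2), of "kq j" A S X] phase2 j X_uncov large
      unfolding S_def by auto
  qed
  then show "1 \<le> card (W \<inter> Cs j \<inter> (\<Union>i\<in>X. A i))"
    using assms(3) by (simp add: Suc_le_eq card_gt_0_iff)
qed

lemma weak_SW_JR_if_phase3_stopped:
  assumes "finite N" "N \<noteq> {}" "finite W" "W3 \<subseteq> W" "W3 \<subseteq> C" "(\<Union>j<l. Cs j) = C"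
    and disj: "\<forall>j<l. \<forall>j'<l. j \<noteq> j' \<longrightarrow> Cs j \<inter> Cs j' = {}" and "total_k l kq > 0"
    and stop: "stop3 N A C l Cs kq W3" and "within_quotas l Cs kq W3"
    and rate: "covers_at_rate N A (real (card N) / real (total_k l kq)) W3"
  shows "weak_SW_JR N A l Cs kq W"
  unfolding weak_SW_JR_def
proof (intro allI impI)
  fix X
  assume X: "X \<subseteq> N"
    and large: "real (card N) / real (total_k l kq) \<le> real (card X) \<and>
      (\<forall>j<l. 1 \<le> card {c \<in> Cs j. \<forall>i\<in>X. c \<in> A i})"
  have "W \<inter> (\<Union>i\<in>X. A i) \<noteq> {}"
  proof
    assume none: "W \<inter> (\<Union>i\<in>X. A i) = {}"
    have X_uncov: "X \<subseteq> uncov N A W3"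
      using X none assms(4) unfolding uncov_def by blast
    have "0 < real (card N) / real (total_k l kq)"
      using assms(1,2,8) by (simp add: card_gt_0_iff)
    then have "X \<noteq> {}"
      using large by auto
    have "card (W3 \<inter> Cs j) = kq j" if j: "j < l" for j
    proof (rule ccontr)
      assume "card (W3 \<inter> Cs j) \<noteq> kq j"
      then have room: "card (W3 \<inter> Cs j) < kq j"
        using \<open>within_quotas l Cs kq W3\<close> j unfolding within_quotas_def by force
      obtain c where c: "c \<in> Cs j" "\<forall>i\<in>X. c \<in> A i"
        using large j by (auto simp: Suc_le_eq card_gt_0_iff)
      then have "eligible3 C l Cs kq W3 c"
        using room j none assms(4,6) \<open>X \<noteq> {}\<close> unfolding eligible3_def by blast
      moreover have "real (card N) / real (total_k l kq) \<le> real (support A (uncov N A W3) c)"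
        using card_le_support[OF assms(1) X_uncov c(2)] large by linarith
      ultimately show False
        using stop unfolding stop3_def by fastforce
    qed
    then have "card W3 = total_k l kq"
      using card_eq_sum_slices[where W = W3 and l = l and Cs = Cs] finite_subset[OF assms(4,3)]
        assms(5,6) disj
      unfolding total_k_def by simp
    then show False
      using card_uncovered_subset_less[OF assms(1,2,8) rate _ X_uncov] large by linarith
  qed
  then show "1 \<le> card (W \<inter> (\<Union>i\<in>X. A i))"
    using assms(3) by (simp add: Suc_le_eq card_gt_0_iff)
qed

context
  fixes N :: "'v set" and A :: "'v \<Rightarrow> 'c set" and C :: "'c set"
    and l :: nat and Cs :: "nat \<Rightarrow> 'c set" and kq :: "nat \<Rightarrow> nat"
  assumes inst: "scv_instance N A C l Cs kq"
begin

lemma finite_voters: "finite N"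
  using inst by (simp add: scv_instance_def)

lemma voters_nonempty: "N \<noteq> {}"
  using inst by (simp add: scv_instance_def)

lemma finite_candidates: "finite C"
  using inst by (simp add: scv_instance_def)

lemma parts_cover: "(\<Union>j<l. Cs j) = C"
  using inst by (simp add: scv_instance_def)

lemma parts_disjoint: "\<forall>j<l. \<forall>j'<l. j \<noteq> j' \<longrightarrow> Cs j \<inter> Cs j' = {}"
  using inst by (simp add: scv_instance_def)

lemma quotas_bounds: "\<forall>j<l. 0 < kq j \<and> kq j \<le> card (Cs j)"
  using inst unfolding scv_instance_def by (auto simp: Suc_le_eq)

lemma finite_part:
  assumes "j < l"
  shows "finite (Cs j)"
proof -
  have "Cs j \<subseteq> C"
    using parts_cover assms by blast
  then show ?thesis
    using finite_candidates by (rule finite_subset)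
qed

lemma total_quota_pos: "total_k l kq > 0"
proof -
  have "0 < l"
    using inst unfolding scv_instance_def by simp
  then have "kq 0 \<le> total_k l kq"
    unfolding total_k_def by (intro member_le_sum) auto
  then show ?thesis
    using quotas_bounds \<open>0 < l\<close> by (meson order_less_le_trans)
qed

lemma phase2_outcome:
  assumes "Ws 0 = {}"
    and runs: "\<forall>j<l. (step2 N A Cs kq j)\<^sup>*\<^sup>* (Ws j) (Ws (Suc j)) \<and> stop2 N A Cs kq j (Ws (Suc j))"
  shows "Ws l \<subseteq> C"
    and "\<forall>j<l. kq j > 0 \<and> stop2 N A Cs kq j (Ws l) \<and> card (Ws l \<inter> Cs j) \<le> kq j \<and>
      covers_at_rate N A (real (card N) / real (kq j)) (Ws l \<inter> Cs j)"
proof -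
  have stages: "\<forall>j<l. Ws j \<subseteq> Ws (Suc j) \<and> Ws (Suc j) \<subseteq> Ws j \<union> Cs j"
    using runs step2_rtranclp_extends by blast
  then show "Ws l \<subseteq> C"
    using stages_subset_Union[where Ws = Ws and l = l and Cs = Cs and m = l] assms(1) parts_cover
    by auto
  show "\<forall>j<l. kq j > 0 \<and> stop2 N A Cs kq j (Ws l) \<and> card (Ws l \<inter> Cs j) \<le> kq j \<and>
      covers_at_rate N A (real (card N) / real (kq j)) (Ws l \<inter> Cs j)"
  proof (intro allI impI)
    fix j
    assume j: "j < l"
    note slices = slice_of_final_stage[OF parts_disjoint assms(1) stages j]
    have "card (Ws (Suc j) \<inter> Cs j) \<le> kq j \<and>
        covers_at_rate N A (real (card N) / real (kq j)) (Ws (Suc j) \<inter> Cs j)"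
      using step2_rtranclp_covers[where A = A and Cs = Cs and kq = kq and j = j and W = "Ws j",
          OF finite_voters finite_part[OF j]] runs j slices(1)
      by simp
    then show "kq j > 0 \<and> stop2 N A Cs kq j (Ws l) \<and> card (Ws l \<inter> Cs j) \<le> kq j \<and>
        covers_at_rate N A (real (card N) / real (kq j)) (Ws l \<inter> Cs j)"
      using slices(2) runs j quotas_bounds
        stop2_slice_cong[where N = N and A = A and Cs = Cs and kq = kq and j = j, OF slices(2)]
      by simp
  qed
qed

lemma procedure_output_fair:
  assumes "procedure_output N A C l Cs kq W"
  shows "is_committee C l Cs kq W \<and> weak_SW_JR N A l Cs kq W \<and> IW_JR N A l Cs kq W"
proof -
  obtain Ws W3 where Ws: "Ws 0 = {}"
      "\<forall>j<l. (step2 N A Cs kq j)\<^sup>*\<^sup>* (Ws j) (Ws (Suc j)) \<and> stop2 N A Cs kq j (Ws (Suc j))"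
    and W3: "(step3 N A C l Cs kq)\<^sup>*\<^sup>* (Ws l) W3" "stop3 N A C l Cs kq W3" "W3 \<subseteq> W"
    and committee: "is_committee C l Cs kq W"
    using assms unfolding procedure_output_def by blast
  note phase2 = phase2_outcome[OF Ws]
  have "W \<subseteq> C"
    using committee unfolding is_committee_def by blast
  then have "finite W"
    using finite_candidates by (rule finite_subset)
  have "within_quotas l Cs kq (Ws l)"
    using phase2(2) unfolding within_quotas_def by blast
  then have phase3: "Ws l \<subseteq> W3" "W3 \<subseteq> C" "within_quotas l Cs kq W3"
    using step3_rtranclp_within_quotas[OF parts_disjoint finite_candidates W3(1) phase2(1)] by simp_all
  have "finite (Ws l)"
    using phase2(1) finite_candidates by (rule finite_subset)
  then have "card (Ws l) = (\<Sum>j<l. card (Ws l \<inter> Cs j))"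
    using phase2(1) parts_cover by (intro card_eq_sum_slices[OF _ _ parts_disjoint]) simp_all
  then have "covers_at_rate N A (real (card N) / real (total_k l kq)) (Ws l)"
    unfolding total_k_def using phase2(2) by (intro covers_at_rate_from_slices[OF finite_voters]) auto
  then have "covers_at_rate N A (real (card N) / real (total_k l kq)) W3"
    using step3_rtranclp_covers[OF finite_voters finite_candidates W3(1) phase2(1)] by simp
  then have "weak_SW_JR N A l Cs kq W"
    by (rule weak_SW_JR_if_phase3_stopped[OF finite_voters voters_nonempty \<open>finite W\<close> W3(3) phase3(2)
        parts_cover parts_disjoint total_quota_pos W3(2) phase3(3)])
  moreover have "IW_JR N A l Cs kq W"
    using phase3(1) W3(3)
    by (intro IW_JR_if_phase2_stopped[OF finite_voters voters_nonempty \<open>finite W\<close> _ phase2(2)]) simp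
  ultimately show ?thesis
    using committee by simp
qed

lemma step2_progress:
  assumes "j < l" "W \<subseteq> C" "\<not> stop2 N A Cs kq j W"
  shows "\<exists>W'. step2 N A Cs kq j W W' \<and> W \<subset> W' \<and> W' \<subseteq> C"
proof -
  from assms(3) obtain c where room: "card (W \<inter> Cs j) < kq j" and c: "c \<in> Cs j - W"
    "real (card N) / real (kq j) \<le> real (support A (uncov_j N A Cs j W) c)"
    unfolding stop2_def by blast
  have "finite (Cs j - W)"
    using finite_part[OF assms(1)] by simp
  then obtain c0 where c0: "c0 \<in> Cs j - W"
    "real (card N) / real (kq j) \<le> real (support A (uncov_j N A Cs j W) c0)"
    "\<forall>c'\<in>Cs j - W. support A (uncov_j N A Cs j W) c' \<le> support A (uncov_j N A Cs j W) c0"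
    by (rule exists_greedy_choice[where g = "support A (uncov_j N A Cs j W)", OF _ c])
  then have "step2 N A Cs kq j W (insert c0 W)"
    unfolding step2_def using room by blast
  moreover have "Cs j \<subseteq> C"
    using parts_cover assms(1) by blast
  ultimately show ?thesis
    using c0(1) assms(2) by blast
qed

lemma step3_progress:
  assumes "W \<subseteq> C" "\<not> stop3 N A C l Cs kq W"
  shows "\<exists>W'. step3 N A C l Cs kq W W' \<and> W \<subset> W' \<and> W' \<subseteq> C"
proof -
  define S where "S = {c. eligible3 C l Cs kq W c}"
  from assms(2) obtain c where c: "c \<in> S"
    "real (card N) / real (total_k l kq) \<le> real (support A (uncov N A W) c)"
    unfolding stop3_def S_def by (auto simp: not_less)
  have "S \<subseteq> C"
    unfolding S_def eligible3_def by blast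
  then have "finite S"
    using finite_candidates by (rule finite_subset)
  then obtain c0 where c0: "c0 \<in> S"
    "real (card N) / real (total_k l kq) \<le> real (support A (uncov N A W) c0)"
    "\<forall>c'\<in>S. support A (uncov N A W) c' \<le> support A (uncov N A W) c0"
    by (rule exists_greedy_choice[where g = "support A (uncov N A W)", OF _ c])
  then have "step3 N A C l Cs kq W (insert c0 W)"
    unfolding step3_def S_def by blast
  moreover have "c0 \<in> C - W"
    using c0(1) unfolding S_def eligible3_def by blast
  ultimately show ?thesis
    using assms(1) by blast
qed

lemma phase2_runs_exist:
  assumes "m \<le> l"
  shows "\<exists>Ws. Ws 0 = {} \<and>
    (\<forall>j<m. (step2 N A Cs kq j)\<^sup>*\<^sup>* (Ws j) (Ws (Suc j)) \<and> stop2 N A Cs kq j (Ws (Suc j))) \<and>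
    Ws m \<subseteq> C"
  using assms
proof (induction m)
  case 0
  show ?case
    by (rule exI[of _ "\<lambda>_. {}"]) simp
next
  case (Suc m)
  then obtain Ws where Ws: "Ws 0 = {}"
    "\<forall>j<m. (step2 N A Cs kq j)\<^sup>*\<^sup>* (Ws j) (Ws (Suc j)) \<and> stop2 N A Cs kq j (Ws (Suc j))"
    "Ws m \<subseteq> C"
    by auto
  have "m < l"
    using Suc.prems by simp
  obtain W' where "(step2 N A Cs kq m)\<^sup>*\<^sup>* (Ws m) W'" "stop2 N A Cs kq m W'" "W' \<subseteq> C"
    using exists_rtranclp_to_stop[OF finite_candidates Ws(3) step2_progress[OF \<open>m < l\<close>]] by blast
  then show ?case
    using Ws by (intro exI[of _ "Ws(Suc m := W')"]) (auto simp: less_Suc_eq)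
qed

lemma procedure_output_exists: "\<exists>W. procedure_output N A C l Cs kq W"
proof -
  obtain Ws where Ws: "Ws 0 = {}"
    "\<forall>j<l. (step2 N A Cs kq j)\<^sup>*\<^sup>* (Ws j) (Ws (Suc j)) \<and> stop2 N A Cs kq j (Ws (Suc j))"
    using phase2_runs_exist[of l] by auto
  note phase2 = phase2_outcome[OF Ws]
  obtain W3 where W3: "(step3 N A C l Cs kq)\<^sup>*\<^sup>* (Ws l) W3" "stop3 N A C l Cs kq W3"
    using exists_rtranclp_to_stop[OF finite_candidates phase2(1)] step3_progress by blast
  have "within_quotas l Cs kq (Ws l)"
    using phase2(2) unfolding within_quotas_def by blast
  then have "W3 \<subseteq> C" "within_quotas l Cs kq W3"
    using step3_rtranclp_within_quotas[OF parts_disjoint finite_candidates W3(1) phase2(1)] by blast+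
  then obtain W where "W3 \<subseteq> W" "is_committee C l Cs kq W"
    using exists_committee_extending[OF finite_candidates _ parts_cover parts_disjoint] quotas_bounds
    by blast
  then show ?thesis
    unfolding procedure_output_def using Ws W3 by blast
qed

end

theorem mainTheorem6:
  fixes N :: "'v set" and A :: "'v \<Rightarrow> 'c set" and C :: "'c set"
    and l :: nat and Cs :: "nat \<Rightarrow> 'c set" and kq :: "nat \<Rightarrow> nat"
  assumes "scv_instance N A C l Cs kq"
  shows "(\<exists>W. is_committee C l Cs kq W \<and> weak_SW_JR N A l Cs kq W \<and> IW_JR N A l Cs kq W)
       \<and> (\<exists>W. procedure_output N A C l Cs kq W)
       \<and> (\<forall>W. procedure_output N A C l Cs kq W \<longrightarrow>
             is_committee C l Cs kq W \<and> weak_SW_JR N A l Cs kq W \<and> IW_JR N A l Cs kq W)"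
  using procedure_output_exists[OF assms] procedure_output_fair[OF assms] by blast

end
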